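(* Let $Z$ be a smooth $l$-dimensional toric variety whose fan contains two $l$-dimensional cones $\sigma_+=\mathrm{cone}(v_1,\dots,v_{l-1},v_+)$ and $\sigma_-=\mathrm{cone}(v_1,\dots,v_{l-1},v_-)$ (with $v_1,\dots,v_{l-1},v_\pm$ primitive) such that $\sigma_+\cap\sigma_-$ has dimension $l-1$ and $\sigma_+\cup\sigma_-$ is strictly convex. Assume moreover that the piecewise linear function $k$ associated to the anticanonical bundle of $Z$ is not strictly convex on $\sigma_+\cup\sigma_-$, i.e. $k_{\sigma_+}(v_-)\ge 1$, where $k_{\sigma_+}$ is the linear function coinciding with $k$ on $\sigma_+$. Then the anticanonical bundle of any toric variety obtained from $Z$ by a sequence of blow-ups centred in torus-fixed points is not ample.
   Context: Toric varieties are for a torus $S$ with cocharacter lattice $\chi_*(S)$; the fan lives in $\chi_*(S)_{\mathbb{R}}$. The piecewise linear function $k$ associated to the anticanonical bundle is the function on the support of the fan, linear on each cone, with $k(v)=1$ for every primitive ray generator $v$; the anticanonical bundle is ample iff for each maximal cone $C$ and each primitive ray generator $v\notin C$ one has $k_C(v)<1$. A blow-up at a torus-fixed point corresponds to star subdivision of a maximal cone at the sum of its generators. *)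

theory Defs
  imports "HOL-Analysis.Analysis"
begin

text \<open>The cocharacter lattice is identified with the integer points of
  real^'n, so the dimension l of the toric variety is CARD('n).
  A cone of a smooth fan is represented by the finite set of its primitive
  ray generators.\<close>

definition lattice_vec :: "real ^ 'n \<Rightarrow> bool" where
  "lattice_vec v \<longleftrightarrow> (\<forall>i. v $ i \<in> \<int>)"

definition primitive :: "real ^ 'n \<Rightarrow> bool" where
  "primitive v \<longleftrightarrow> lattice_vec v \<and> v \<noteq> 0 \<and>
     (\<forall>(k::nat) w. lattice_vec w \<and> v = of_nat k *\<^sub>R w \<longrightarrow> k = 1)"

definition gen_cone :: "(real ^ 'n) set \<Rightarrow> (real ^ 'n) set" where
  "gen_cone S = {x. \<exists>c. (\<forall>v\<in>S. c v \<ge> 0) \<and> x = (\<Sum>v\<in>S. c v *\<^sub>R v)}"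

definition unimodular :: "(real ^ 'n) set \<Rightarrow> bool" where
  "unimodular S \<longleftrightarrow> (\<exists>B. S \<subseteq> B \<and> finite B \<and> card B = CARD('n) \<and> (\<forall>b\<in>B. lattice_vec b) \<and>
      (\<forall>x. lattice_vec x \<longrightarrow> (\<exists>c::real^'n \<Rightarrow> int. x = (\<Sum>b\<in>B. of_int (c b) *\<^sub>R b))))"

definition smooth_fan :: "(real ^ 'n) set set \<Rightarrow> bool" where
  "smooth_fan \<Sigma> \<longleftrightarrow> finite \<Sigma> \<and> {} \<in> \<Sigma> \<and>
     (\<forall>S\<in>\<Sigma>. finite S \<and> (\<forall>v\<in>S. primitive v) \<and> unimodular S) \<and>
     (\<forall>S\<in>\<Sigma>. \<forall>T. T \<subseteq> S \<longrightarrow> T \<in> \<Sigma>) \<and>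
     (\<forall>S\<in>\<Sigma>. \<forall>T\<in>\<Sigma>. gen_cone S \<inter> gen_cone T = gen_cone (S \<inter> T))"

definition rays :: "(real ^ 'n) set set \<Rightarrow> (real ^ 'n) set" where
  "rays \<Sigma> = {v. {v} \<in> \<Sigma>}"

definition maximal_cone :: "(real ^ 'n) set set \<Rightarrow> (real ^ 'n) set \<Rightarrow> bool" where
  "maximal_cone \<Sigma> C \<longleftrightarrow> C \<in> \<Sigma> \<and> \<not> (\<exists>D\<in>\<Sigma>. C \<subset> D)"

text \<open>The linear function k_C (as a vector y, k_C(x) = y \<bullet> x) coinciding with the
  anticanonical piecewise linear function k on a full-dimensional cone C.\<close>
definition kC :: "(real ^ 'n) set \<Rightarrow> real ^ 'n \<Rightarrow> real" where
  "kC C x = (THE y. \<forall>v\<in>C. y \<bullet> v = 1) \<bullet> x"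

text \<open>Ampleness criterion for the anticanonical bundle: for each maximal cone C
  the linear function agreeing with k on C (k = 1 on its generators) is < 1 on
  all primitive ray generators outside C.\<close>
definition anticanonical_ample :: "(real ^ 'n) set set \<Rightarrow> bool" where
  "anticanonical_ample \<Sigma> \<longleftrightarrow>
     (\<forall>C. maximal_cone \<Sigma> C \<longrightarrow>
        (\<exists>y::real^'n. (\<forall>v\<in>C. y \<bullet> v = 1) \<and> (\<forall>v\<in>rays \<Sigma> - C. y \<bullet> v < 1)))"

text \<open>Blow-up at the torus-fixed point of the l-dimensional cone S:
  star subdivision of S at the sum of its generators.\<close>
definition star_subdivision :: "(real ^ 'n) set set \<Rightarrow> (real ^ 'n) set \<Rightarrow> (real ^ 'n) set set" where
  "star_subdivision \<Sigma> S =
     {T\<in>\<Sigma>. \<not> S \<subseteq> T} \<union> {insert (\<Sum>v\<in>S. v) T | T. T \<subset> S}"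

definition blowup_step :: "(real ^ 'n) set set \<Rightarrow> (real ^ 'n) set set \<Rightarrow> bool" where
  "blowup_step \<Sigma> \<Sigma>' \<longleftrightarrow>
     (\<exists>S. S \<in> \<Sigma> \<and> card S = CARD('n) \<and> \<Sigma>' = star_subdivision \<Sigma> S)"

abbreviation blowup_seq :: "(real ^ 'n) set set \<Rightarrow> (real ^ 'n) set set \<Rightarrow> bool" where
  "blowup_seq \<equiv> blowup_step\<^sup>*\<^sup>*"

end

theory Submission
  imports Defs
begin

text \<open>Write v- = \<alpha> v+ + \<Sum> c_i v_i in the basis of \<sigma>+. Non-convexity says
  k_\<sigma>+(v-) = \<alpha> + \<Sum> c_i \<ge> 1, and since \<sigma>+ and \<sigma>- meet only in their common
  facet, \<alpha> \<le> 0. Any such configuration (a maximal cone and a ray outside it whose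
  coefficients satisfy \<alpha> \<le> 0 and \<alpha> + \<Sum> c_i \<ge> 1) already violates the ampleness
  criterion, and it survives blow-ups: blowing up another cone leaves it intact, while
  blowing up \<sigma>+ itself replaces v+ by w = v+ + \<Sum> v_i, and then
  v- = \<alpha> w + \<Sum> (c_i - \<alpha>) v_i, whose coefficient sum only grew because \<alpha> \<le> 0.\<close>

lemma CARD_ge_1: "CARD('n::finite) \<ge> 1"
  using finite_UNIV_card_ge_0[where 'a='n] by simp

definition cones_bounded :: "(real ^ 'n) set set \<Rightarrow> bool" where
  "cones_bounded \<Sigma> \<longleftrightarrow> (\<forall>T\<in>\<Sigma>. finite T \<and> card T \<le> CARD('n))"

lemma smooth_fan_cones_bounded:
  fixes \<Sigma> :: "(real ^ 'n) set set"
  assumes "smooth_fan \<Sigma>"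
  shows "cones_bounded \<Sigma>"
  unfolding cones_bounded_def
proof
  fix T assume "T \<in> \<Sigma>"
  then have "finite T" "unimodular T" using assms unfolding smooth_fan_def by auto
  then obtain B where "T \<subseteq> B" "finite B" "card B = CARD('n)" unfolding unimodular_def by blast
  with \<open>finite T\<close> show "finite T \<and> card T \<le> CARD('n)" by (metis card_mono)
qed

lemma cones_bounded_star_subdivision:
  fixes \<Sigma> :: "(real ^ 'n) set set"
  assumes "cones_bounded \<Sigma>" and "S \<in> \<Sigma>"
  shows "cones_bounded (star_subdivision \<Sigma> S)"
  unfolding cones_bounded_def
proof
  fix T assume "T \<in> star_subdivision \<Sigma> S"
  then consider "T \<in> \<Sigma>" | T0 where "T = insert (\<Sum>v\<in>S. v) T0" "T0 \<subset> S"
    unfolding star_subdivision_def by blast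
  then show "finite T \<and> card T \<le> CARD('n)"
  proof cases
    case 1
    then show ?thesis using assms(1) unfolding cones_bounded_def by blast
  next
    case 2
    have S: "finite S" "card S \<le> CARD('n)" using assms unfolding cones_bounded_def by auto
    then have "finite T0" "card T0 < card S" using 2 by (auto intro: finite_subset psubset_card_mono)
    then show ?thesis using 2 S by (simp add: card_insert_if)
  qed
qed

lemma maximal_cone_if_card_eq:
  fixes \<Sigma> :: "(real ^ 'n) set set"
  assumes "cones_bounded \<Sigma>" and "C \<in> \<Sigma>" and "card C = CARD('n)"
  shows "maximal_cone \<Sigma> C"
  unfolding maximal_cone_def
proof (intro conjI notI)
  show "C \<in> \<Sigma>" by fact
  assume "\<exists>D\<in>\<Sigma>. C \<subset> D"
  then obtain D where "D \<in> \<Sigma>" "C \<subset> D" by blast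
  with assms show False unfolding cones_bounded_def by (metis leD psubset_card_mono)
qed

lemma ray_in_star_subdivision:
  assumes "{b} \<in> \<Sigma>" and "S \<noteq> {}"
  shows "{b} \<in> star_subdivision \<Sigma> S"
proof (cases "S \<subseteq> {b}")
  case True
  with assms(2) have "S = {b}" by auto
  then have "{b} = insert (\<Sum>v\<in>S. v) {} \<and> {} \<subset> S" by auto
  then show ?thesis unfolding star_subdivision_def by blast
qed (use assms in \<open>auto simp: star_subdivision_def\<close>)

text \<open>The cone \<open>insert a W\<close> plays the role of \<sigma>+ and the ray b that of v-.\<close>
definition nonample_witness ::
    "(real ^ 'n) set set \<Rightarrow> real ^ 'n \<Rightarrow> (real ^ 'n) set \<Rightarrow> real ^ 'n \<Rightarrow> bool" where
  "nonample_witness \<Sigma> a W b \<longleftrightarrow>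
     a \<notin> W \<and> finite W \<and> card W = CARD('n) - 1 \<and> independent (insert a W) \<and>
     insert a W \<in> \<Sigma> \<and> {b} \<in> \<Sigma> \<and> b \<notin> insert a W \<and>
     (\<exists>\<alpha> c. \<alpha> \<le> 0 \<and> 1 \<le> \<alpha> + sum c W \<and> b = \<alpha> *\<^sub>R a + (\<Sum>u\<in>W. c u *\<^sub>R u))"

lemma nonample_witness_card:
  fixes \<Sigma> :: "(real ^ 'n) set set"
  assumes "nonample_witness \<Sigma> a W b"
  shows "card (insert a W) = CARD('n)"
  using assms CARD_ge_1[where 'n='n] unfolding nonample_witness_def by auto

lemma not_anticanonical_ample_if_witness:
  fixes \<Sigma> :: "(real ^ 'n) set set"
  assumes "cones_bounded \<Sigma>" and "nonample_witness \<Sigma> a W b"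
  shows "\<not> anticanonical_ample \<Sigma>"
proof
  assume "anticanonical_ample \<Sigma>"
  moreover have "maximal_cone \<Sigma> (insert a W)"
    using assms nonample_witness_card maximal_cone_if_card_eq
    unfolding nonample_witness_def by blast
  ultimately obtain y where y: "\<forall>v\<in>insert a W. y \<bullet> v = 1" "\<forall>v\<in>rays \<Sigma> - insert a W. y \<bullet> v < 1"
    unfolding anticanonical_ample_def by blast
  obtain \<alpha> c where "1 \<le> \<alpha> + sum c W" and b: "b = \<alpha> *\<^sub>R a + (\<Sum>u\<in>W. c u *\<^sub>R u)"
    using assms(2) unfolding nonample_witness_def by blast
  moreover have "y \<bullet> b = \<alpha> + sum c W"
    using y(1) by (simp add: b inner_add_right inner_sum_right)
  moreover have "b \<in> rays \<Sigma> - insert a W"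
    using assms(2) unfolding nonample_witness_def rays_def by auto
  then have "y \<bullet> b < 1" using y(2) by blast
  ultimately show False by linarith
qed

lemma scaleR_add_span_neq:
  fixes x y :: "'a::real_vector"
  assumes "x \<notin> span W" and "y \<in> span W" and "\<alpha> \<noteq> 1"
  shows "\<alpha> *\<^sub>R x + y \<noteq> x"
proof
  assume "\<alpha> *\<^sub>R x + y = x"
  then have "(1 - \<alpha>) *\<^sub>R x = y" by (simp add: algebra_simps)
  then have "inverse (1 - \<alpha>) *\<^sub>R y = x" using assms(3) by auto
  with assms show False by (metis span_scale)
qed

lemma nonample_witness_star_subdivision_self:
  fixes \<Sigma> :: "(real ^ 'n) set set"
  assumes wit: "nonample_witness \<Sigma> a W b"
  defines "w \<equiv> a + (\<Sum>u\<in>W. u)"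
  shows "nonample_witness (star_subdivision \<Sigma> (insert a W)) w W b"
proof -
  obtain \<alpha> c where \<alpha>: "\<alpha> \<le> 0" "1 \<le> \<alpha> + sum c W" and b: "b = \<alpha> *\<^sub>R a + (\<Sum>u\<in>W. c u *\<^sub>R u)"
    using wit unfolding nonample_witness_def by blast
  have W: "a \<notin> W" "finite W" "card W = CARD('n) - 1" "{b} \<in> \<Sigma>" "b \<notin> insert a W"
    and ind: "independent (insert a W)"
    using wit unfolding nonample_witness_def by auto
  have sumW: "(\<Sum>u\<in>W. u) \<in> span W" by (intro span_sum span_base)
  have "a \<notin> span W" "independent W" using ind W(1) by (simp_all add: independent_insert)
  then have w_span: "w \<notin> span W" using sumW by (simp add: w_def span_add_eq2)
  then have w: "w \<notin> W" "independent (insert w W)"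
    using \<open>independent W\<close> by (auto simp: independent_insert span_base)
  define c' where "c' u = c u - \<alpha>" for u
  have b': "b = \<alpha> *\<^sub>R w + (\<Sum>u\<in>W. c' u *\<^sub>R u)"
    by (simp add: b w_def c'_def scaleR_add_right scaleR_sum_right scaleR_left_diff_distrib sum_subtractf)
  have "b \<noteq> w"
    unfolding b' using w_span \<alpha>(1) by (intro scaleR_add_span_neq) (auto intro: span_sum span_scale span_base)
  then have b_notin: "b \<notin> insert w W" using W(5) by simp
  have sum_c': "1 \<le> \<alpha> + sum c' W"
    using \<alpha> mult_nonneg_nonpos[of "real (card W)" \<alpha>] by (simp add: c'_def sum_subtractf)
  have "(\<Sum>v\<in>insert a W. v) = w" "W \<subset> insert a W"
    using W(1,2) by (auto simp: w_def)
  then have cone: "insert w W \<in> star_subdivision \<Sigma> (insert a W)"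
    unfolding star_subdivision_def by blast
  have ray: "{b} \<in> star_subdivision \<Sigma> (insert a W)"
    by (rule ray_in_star_subdivision[OF W(4)]) simp
  have "\<exists>\<alpha> c. \<alpha> \<le> 0 \<and> 1 \<le> \<alpha> + sum c W \<and> b = \<alpha> *\<^sub>R w + (\<Sum>u\<in>W. c u *\<^sub>R u)"
    using \<alpha>(1) sum_c' b' by blast
  then show ?thesis
    unfolding nonample_witness_def using w W(2,3) cone ray b_notin by (intro conjI) assumption+
qed

lemma nonample_witness_star_subdivision_other:
  fixes \<Sigma> :: "(real ^ 'n) set set"
  assumes wit: "nonample_witness \<Sigma> a W b"
    and S: "card S = CARD('n)" "S \<noteq> insert a W"
  shows "nonample_witness (star_subdivision \<Sigma> S) a W b"
proof -
  have "finite (insert a W)" using wit unfolding nonample_witness_def by simp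
  then have "\<not> S \<subseteq> insert a W"
    using S card_subset_eq nonample_witness_card[OF wit] by metis
  then have cone: "insert a W \<in> star_subdivision \<Sigma> S"
    using wit unfolding nonample_witness_def star_subdivision_def by blast
  have "S \<noteq> {}" using S(1) CARD_ge_1[where 'n='n] by auto
  then have ray: "{b} \<in> star_subdivision \<Sigma> S"
    using wit ray_in_star_subdivision unfolding nonample_witness_def by blast
  show ?thesis
    using wit cone ray unfolding nonample_witness_def by (elim conjE) (intro conjI; assumption)
qed

definition has_nonample_witness :: "(real ^ 'n) set set \<Rightarrow> bool" where
  "has_nonample_witness \<Sigma> \<longleftrightarrow> cones_bounded \<Sigma> \<and> (\<exists>a W b. nonample_witness \<Sigma> a W b)"

lemma has_nonample_witness_blowup_step:
  fixes \<Sigma> :: "(real ^ 'n) set set"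
  assumes "has_nonample_witness \<Sigma>" and "blowup_step \<Sigma> \<Sigma>'"
  shows "has_nonample_witness \<Sigma>'"
proof -
  obtain S where S: "S \<in> \<Sigma>" "card S = CARD('n)" and \<Sigma>': "\<Sigma>' = star_subdivision \<Sigma> S"
    using assms(2) unfolding blowup_step_def by blast
  obtain a W b where wit: "nonample_witness \<Sigma> a W b" and bounded: "cones_bounded \<Sigma>"
    using assms(1) unfolding has_nonample_witness_def by blast
  have "\<exists>a W b. nonample_witness \<Sigma>' a W b"
  proof (cases "S = insert a W")
    case True
    then show ?thesis using nonample_witness_star_subdivision_self[OF wit] unfolding \<Sigma>' by blast
  next
    case False
    then show ?thesis using nonample_witness_star_subdivision_other[OF wit S(2)] unfolding \<Sigma>' by blast
  qed
  then show ?thesis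
    using cones_bounded_star_subdivision[OF bounded S(1)]
    unfolding has_nonample_witness_def \<Sigma>' by blast
qed

lemma unimodular_span_UNIV:
  fixes A :: "(real ^ 'n) set"
  assumes "unimodular A" and "finite A" and "card A = CARD('n)"
  shows "span A = UNIV"
proof -
  obtain B where B: "A \<subseteq> B" "finite B" "card B = CARD('n)"
    "\<forall>x. lattice_vec x \<longrightarrow> (\<exists>c::real^'n \<Rightarrow> int. x = (\<Sum>b\<in>B. of_int (c b) *\<^sub>R b))"
    using assms(1) unfolding unimodular_def by blast
  have "A = B" using card_subset_eq[OF B(2,1)] B(3) assms(3) by simp
  have lattice_in_span: "x \<in> span A" if x: "lattice_vec x" for x
  proof -
    obtain c :: "real^'n \<Rightarrow> int" where "x = (\<Sum>b\<in>A. of_int (c b) *\<^sub>R b)"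
      using B(4) x \<open>A = B\<close> by blast
    then show ?thesis by (auto intro!: span_sum span_scale intro: span_base)
  qed
  have "Basis \<subseteq> span A"
  proof
    fix x :: "real^'n" assume "x \<in> Basis"
    then obtain i where "x = axis i 1" unfolding Basis_vec_def by auto
    then have "lattice_vec x" unfolding lattice_vec_def axis_def by auto
    then show "x \<in> span A" by (rule lattice_in_span)
  qed
  then have "span Basis \<subseteq> span A" by (metis span_mono span_span)
  then show ?thesis by (simp add: top.extremum_unique)
qed

lemma ex1_inner_eq_one_on_basis:
  fixes A :: "'a::euclidean_space set"
  assumes "independent A" and "span A = UNIV"
  shows "\<exists>!y. \<forall>v\<in>A. y \<bullet> v = 1"
proof -
  obtain g where g: "linear g" "\<forall>x\<in>A. g x = (1::real)"
    using linear_independent_extend[OF assms(1), of "\<lambda>_. 1"] by blast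
  define y0 where "y0 = adjoint g 1"
  have y0: "\<forall>v\<in>A. y0 \<bullet> v = 1"
    using g adjoint_works[OF g(1)] by (simp add: y0_def inner_commute)
  have "y = y0" if y: "\<forall>v\<in>A. y \<bullet> v = 1" for y
  proof -
    have "orthogonal (y - y0) z" for z
    proof -
      have "z \<in> span A" using assms(2) by simp
      then show ?thesis
        by (rule orthogonal_to_span) (use y y0 in \<open>auto simp: orthogonal_def inner_diff_left\<close>)
    qed
    then have "orthogonal (y - y0) (y - y0)" .
    then show ?thesis by (simp add: orthogonal_def)
  qed
  with y0 show ?thesis by blast
qed

lemma kC_eq_coeff_sum:
  fixes A :: "(real ^ 'n) set"
  assumes "independent A" and "span A = UNIV" and "x = (\<Sum>v\<in>A. u v *\<^sub>R v)"
  shows "kC A x = sum u A"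
proof -
  have ex1: "\<exists>!y. \<forall>v\<in>A. y \<bullet> v = 1" using assms(1,2) by (rule ex1_inner_eq_one_on_basis)
  then obtain y where y: "\<forall>v\<in>A. y \<bullet> v = 1" by blast
  have "(THE y. \<forall>v\<in>A. y \<bullet> v = 1) = y" using ex1 y by (rule the1_equality)
  then have "kC A x = (\<Sum>v\<in>A. u v * (y \<bullet> v))"
    by (simp add: kC_def assms(3) inner_sum_right)
  then show ?thesis using y by simp
qed

lemma gen_cone_insert_memI:
  fixes a :: "real ^ 'n"
  assumes "finite V" "a \<notin> V" "0 \<le> t" "\<forall>v\<in>V. 0 \<le> c v"
  shows "t *\<^sub>R a + (\<Sum>v\<in>V. c v *\<^sub>R v) \<in> gen_cone (insert a V)"
  unfolding gen_cone_def
proof (intro CollectI exI[of _ "c(a := t)"] conjI)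
  show "\<forall>v\<in>insert a V. 0 \<le> (c(a := t)) v" using assms by auto
  have "(\<Sum>v\<in>V. (c(a := t)) v *\<^sub>R v) = (\<Sum>v\<in>V. c v *\<^sub>R v)"
    using assms(2) by (intro sum.cong) auto
  then show "t *\<^sub>R a + (\<Sum>v\<in>V. c v *\<^sub>R v) = (\<Sum>v\<in>insert a V. (c(a := t)) v *\<^sub>R v)"
    using assms(1,2) by simp
qed

lemma gen_cone_subset_span: "gen_cone S \<subseteq> span S"
  unfolding gen_cone_def by (auto intro!: span_sum span_scale intro: span_base)

text \<open>If the coefficient t were positive, adding \<open>\<Sum> \<bar>u v\<bar> v\<close> to vm would give a point
  of both cones outside their common face.\<close>
lemma coeff_nonpos_if_cones_meet_in_face:
  fixes vp vm :: "real ^ 'n"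
  assumes "finite V" "vp \<notin> V" "vm \<notin> V" "vp \<notin> span V"
    and meet: "gen_cone (insert vp V) \<inter> gen_cone (insert vm V) \<subseteq> gen_cone V"
    and vm: "vm = t *\<^sub>R vp + (\<Sum>v\<in>V. u v *\<^sub>R v)"
  shows "t \<le> 0"
proof (rule ccontr)
  assume "\<not> t \<le> 0"
  define x where "x = vm + (\<Sum>v\<in>V. \<bar>u v\<bar> *\<^sub>R v)"
  have x_vp: "x = t *\<^sub>R vp + (\<Sum>v\<in>V. (u v + \<bar>u v\<bar>) *\<^sub>R v)"
    by (simp add: x_def vm scaleR_add_left sum.distrib)
  have "x \<in> gen_cone (insert vp V)"
    unfolding x_vp using assms(1,2) \<open>\<not> t \<le> 0\<close> by (intro gen_cone_insert_memI) auto
  moreover have "x \<in> gen_cone (insert vm V)"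
    using gen_cone_insert_memI[OF assms(1,3), of 1 "\<lambda>v. \<bar>u v\<bar>"] by (simp add: x_def)
  ultimately have "x \<in> span V" using meet gen_cone_subset_span by blast
  moreover have "(\<Sum>v\<in>V. (u v + \<bar>u v\<bar>) *\<^sub>R v) \<in> span V"
    by (intro span_sum span_scale span_base)
  ultimately have "t *\<^sub>R vp \<in> span V" unfolding x_vp by (simp add: span_add_eq2)
  then have "inverse t *\<^sub>R (t *\<^sub>R vp) \<in> span V" by (rule span_scale)
  with \<open>\<not> t \<le> 0\<close> assms(4) show False by simp
qed

lemma smooth_fan_nonample_witness:
  fixes \<Sigma> :: "(real ^ 'n) set set"
  assumes fan: "smooth_fan \<Sigma>"
    and V: "finite V" "card V = CARD('n) - 1" "vp \<notin> V" "vm \<notin> V" "vp \<noteq> vm"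
    and sp: "insert vp V \<in> \<Sigma>"
    and sm: "insert vm V \<in> \<Sigma>"
    and not_convex: "kC (insert vp V) vm \<ge> 1"
  shows "nonample_witness \<Sigma> vp V vm"
proof -
  have card: "card (insert vp V) = CARD('n)" using V CARD_ge_1[where 'n='n] by simp
  have "unimodular (insert vp V)" using fan sp by (simp add: smooth_fan_def)
  then have span: "span (insert vp V) = UNIV"
    using V(1) card by (intro unimodular_span_UNIV) simp_all
  then have ind: "independent (insert vp V)"
    using card_eq_dim[of "insert vp V" UNIV] V(1) card by simp
  have "vm \<in> range (\<lambda>u. \<Sum>v\<in>insert vp V. u v *\<^sub>R v)"
    using span_finite[of "insert vp V"] span V(1) by simp
  then obtain u where u: "vm = (\<Sum>v\<in>insert vp V. u v *\<^sub>R v)" by blast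
  have vm: "vm = u vp *\<^sub>R vp + (\<Sum>v\<in>V. u v *\<^sub>R v)"
    using u V(1,3) by simp
  have "kC (insert vp V) vm = u vp + sum u V"
    using kC_eq_coeff_sum[OF ind span u] V(1,3) by simp
  then have sum_u: "1 \<le> u vp + sum u V" using not_convex by simp
  have meet: "\<forall>S\<in>\<Sigma>. \<forall>T\<in>\<Sigma>. gen_cone S \<inter> gen_cone T = gen_cone (S \<inter> T)"
    and closed: "\<forall>S\<in>\<Sigma>. \<forall>T. T \<subseteq> S \<longrightarrow> T \<in> \<Sigma>"
    using fan by (simp_all add: smooth_fan_def)
  have ray: "{vm} \<in> \<Sigma>" using closed sm by simp
  have "gen_cone (insert vp V) \<inter> gen_cone (insert vm V) = gen_cone (insert vp V \<inter> insert vm V)"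
    using meet sp sm by simp
  moreover have "insert vp V \<inter> insert vm V = V" using V by auto
  moreover have "vp \<notin> span V" using ind V(3) by (simp add: independent_insert)
  ultimately have u_nonpos: "u vp \<le> 0"
    using coeff_nonpos_if_cones_meet_in_face[OF V(1,3,4) _ _ vm] by simp
  have vm_notin: "vm \<notin> insert vp V" using V by simp
  show ?thesis
    unfolding nonample_witness_def
    using V(1-3) ind sp ray vm_notin u_nonpos sum_u vm by blast
qed

theorem lemma3p1:
  fixes \<Sigma> :: "(real ^ 'n) set set"
    and V :: "(real ^ 'n) set"
    and vp vm :: "real ^ 'n"
  assumes fan: "smooth_fan \<Sigma>"
    and V_card: "finite V" "card V = CARD('n) - 1"
    and prim: "\<forall>v\<in>V. primitive v" "primitive vp" "primitive vm"
    and notin: "vp \<notin> V" "vm \<notin> V" "vp \<noteq> vm"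
    and sp: "insert vp V \<in> \<Sigma>"
    and sm: "insert vm V \<in> \<Sigma>"
    and inter_dim: "aff_dim (gen_cone (insert vp V) \<inter> gen_cone (insert vm V)) = int CARD('n) - 1"
    and union_convex: "convex (gen_cone (insert vp V) \<union> gen_cone (insert vm V))"
    and union_strict: "\<forall>x. x \<in> gen_cone (insert vp V) \<union> gen_cone (insert vm V) \<and>
                            - x \<in> gen_cone (insert vp V) \<union> gen_cone (insert vm V) \<longrightarrow> x = 0"
    and not_convex: "kC (insert vp V) vm \<ge> 1"
  shows "\<forall>\<Sigma>'. blowup_seq \<Sigma> \<Sigma>' \<longrightarrow> \<not> anticanonical_ample \<Sigma>'"
proof (intro allI impI)
  fix \<Sigma>' assume "blowup_seq \<Sigma> \<Sigma>'"
  then have "has_nonample_witness \<Sigma>'"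
  proof (induction rule: rtranclp_induct)
    case base
    show ?case
      using smooth_fan_cones_bounded[OF fan] smooth_fan_nonample_witness[OF fan V_card notin sp sm not_convex]
      unfolding has_nonample_witness_def by blast
  next
    case step
    then show ?case using has_nonample_witness_blowup_step by blast
  qed
  then show "\<not> anticanonical_ample \<Sigma>'"
    unfolding has_nonample_witness_def using not_anticanonical_ample_if_witness by blast
qed

end
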